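(* Let $X\in\mathcal M_{\mathbf r}$ and $V\in\mathrm T_X\mathcal M_{\mathbf r}$. Suppose $V$ is represented both by cores $\delta V_1,\dots,\delta V_d$ as $V(i_1,\dots,i_d)=\sum_{k=1}^dU_1(i_1)\cdots U_{k-1}(i_{k-1})\delta V_k(i_k)U_{k+1}(i_{k+1})\cdots U_d(i_d)$ with $(\delta V_k^L)^\top U_k^L=0$ for $k\in[d-1]$, and by cores $\delta\tilde V_1,\dots,\delta\tilde V_d$ as $V(i_1,\dots,i_d)=\sum_{k=1}^dU_1(i_1)\cdots U_{k-1}(i_{k-1})\delta\tilde V_k(i_k)\tilde U_{k+1}(i_{k+1})\cdots\tilde U_d(i_d)$ with $(\delta\tilde V_k^L)^\top U_k^L=0$ for $k\in[d-1]$. Then $\delta\tilde V_k^L=\delta V_k^LR_k^\top$ for all $k\in[d-1]$, where $R_k\in\mathbb R^{r_k\times r_k}$ is the invertible matrix with $X_{\ge k+1}=\tilde X_{\ge k+1}R_k$; and $\delta\tilde V_d^L=\delta V_d^L$.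
   Context: Fix $d\ge2$, positive integers $n_1,\dots,n_d$, $\mathbf r=(r_1,\dots,r_{d-1})$, $r_0=r_d=1$. Flattenings $Z^{<\mu>}$ use colexicographic ordering of row indices $(i_1,\dots,i_\mu)$ and column indices $(i_{\mu+1},\dots,i_d)$. $\mathcal M_{\mathbf r}$ is the manifold of tensors of TT-rank $\mathbf r$ (TT-rank $=(\mathrm{rank}\,Z^{<1>},\dots,\mathrm{rank}\,Z^{<d-1>})$). $U_1,\dots,U_d$ is a minimal left-orthogonal TT decomposition of $X$ ($U_k\in\mathbb R^{r_{k-1}\times n_k\times r_k}$, $X(i_1,\dots,i_d)=U_1(i_1)\cdots U_d(i_d)$, $(U_k^L)^\top U_k^L=I$ for $k<d$, with $U^L=U^{<2>}$, $U^R=U^{<1>}$), and $\tilde U_1,\dots,\tilde U_d$ is the minimal right-orthogonal TT decomposition of $X$ obtained from it by right-orthogonalization ($\tilde U_k^R(\tilde U_k^R)^\top=I$ for $k\ge2$). Right interface matrices: $X_{\ge d+1}=1$, $X_{\ge k}^\top=U_k^R(X_{\ge k+1}^\top\otimes I_{n_k})$, and $\tilde X_{\ge k}$ likewise from $\tilde U_k$; $X_{\ge k+1}$ and $\tilde X_{\ge k+1}$ have the same column space, so an invertible $R_k$ with $X_{\ge k+1}=\tilde X_{\ge k+1}R_k$ exists. *)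

theory Defs
  imports "Jordan_Normal_Form.DL_Rank"
begin

text \<open>A d-th order tensor of size n 1 x ... x n d is a function
  Z :: (nat => nat) => real evaluated at index functions i with i j < n j for 1 <= j <= d
  (and i j = 0 for j outside 1..d).\<close>

definition tt_index :: "nat \<Rightarrow> (nat \<Rightarrow> nat) \<Rightarrow> (nat \<Rightarrow> nat) set" where
  "tt_index d n = {i. (\<forall>j\<in>{1..d}. i j < n j) \<and> (\<forall>j. j \<notin> {1..d} \<longrightarrow> i j = 0)}"

text \<open>Colexicographic decoding: component j of a multi-index (i a, i (a+1), ...) linearised as
  i a + n a * (i (a+1) + n (a+1) * ...).\<close>
definition colex_decode :: "(nat \<Rightarrow> nat) \<Rightarrow> nat \<Rightarrow> nat \<Rightarrow> nat \<Rightarrow> nat" where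
  "colex_decode n a p j = (p div (\<Prod>l\<in>{a..<j}. n l)) mod n j"

definition flattening :: "nat \<Rightarrow> (nat \<Rightarrow> nat) \<Rightarrow> ((nat \<Rightarrow> nat) \<Rightarrow> real) \<Rightarrow> nat \<Rightarrow> real mat" where
  "flattening d n Z \<mu> = mat (\<Prod>j\<in>{1..\<mu>}. n j) (\<Prod>j\<in>{\<mu>+1..d}. n j)
     (\<lambda>(p, q). Z (\<lambda>j. if j \<in> {1..\<mu>} then colex_decode n 1 p j
                      else if j \<in> {\<mu>+1..d} then colex_decode n (\<mu>+1) q j else 0))"

definition mat_rank :: "real mat \<Rightarrow> nat" where
  "mat_rank A = vec_space.rank (dim_row A) A"

definition has_tt_rank :: "nat \<Rightarrow> (nat \<Rightarrow> nat) \<Rightarrow> (nat \<Rightarrow> nat) \<Rightarrow> ((nat \<Rightarrow> nat) \<Rightarrow> real) \<Rightarrow> bool" where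
  "has_tt_rank d n r Z \<longleftrightarrow> (\<forall>\<mu>\<in>{1..d-1}. mat_rank (flattening d n Z \<mu>) = r \<mu>)"

fun mprod :: "nat \<Rightarrow> real mat list \<Rightarrow> real mat" where
  "mprod m [] = 1\<^sub>m m"
| "mprod m (A # As) = A * mprod (dim_col A) As"

definition core_dims :: "nat \<Rightarrow> (nat \<Rightarrow> nat) \<Rightarrow> (nat \<Rightarrow> nat) \<Rightarrow> (nat \<Rightarrow> nat \<Rightarrow> real mat) \<Rightarrow> bool" where
  "core_dims d n r G \<longleftrightarrow> (\<forall>k\<in>{1..d}. \<forall>i<n k. G k i \<in> carrier_mat (r (k-1)) (r k))"

definition tt_repr :: "nat \<Rightarrow> (nat \<Rightarrow> nat) \<Rightarrow> (nat \<Rightarrow> nat \<Rightarrow> real mat) \<Rightarrow> ((nat \<Rightarrow> nat) \<Rightarrow> real) \<Rightarrow> bool" where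
  "tt_repr d n G Z \<longleftrightarrow> (\<forall>i\<in>tt_index d n. Z i = mprod 1 (map (\<lambda>j. G j (i j)) [1..<d+1]) $$ (0, 0))"

text \<open>Left unfolding G^L = G^{<2>}: rows (alpha, i) colex (alpha + r(k-1) * i), columns beta.\<close>
definition leftU :: "(nat \<Rightarrow> nat) \<Rightarrow> (nat \<Rightarrow> nat) \<Rightarrow> (nat \<Rightarrow> nat \<Rightarrow> real mat) \<Rightarrow> nat \<Rightarrow> real mat" where
  "leftU r n G k = mat (r (k-1) * n k) (r k) (\<lambda>(p, \<beta>). G k (p div r (k-1)) $$ (p mod r (k-1), \<beta>))"

text \<open>Right unfolding G^R = G^{<1>}: rows alpha, columns (i, beta) colex (i + n k * beta).\<close>
definition rightU :: "(nat \<Rightarrow> nat) \<Rightarrow> (nat \<Rightarrow> nat) \<Rightarrow> (nat \<Rightarrow> nat \<Rightarrow> real mat) \<Rightarrow> nat \<Rightarrow> real mat" where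
  "rightU r n G k = mat (r (k-1)) (n k * r k) (\<lambda>(\<alpha>, q). G k (q mod n k) $$ (\<alpha>, q div n k))"

definition kron :: "real mat \<Rightarrow> real mat \<Rightarrow> real mat" where
  "kron A B = mat (dim_row A * dim_row B) (dim_col A * dim_col B)
     (\<lambda>(i, j). A $$ (i div dim_row B, j div dim_col B) * B $$ (i mod dim_row B, j mod dim_col B))"

text \<open>XgeT d n r G m = (X_{>= d+1-m})^T, via X_{>= d+1} = 1 and
  X_{>= k}^T = G_k^R (X_{>= k+1}^T kron I_{n k}).\<close>
fun XgeT :: "nat \<Rightarrow> (nat \<Rightarrow> nat) \<Rightarrow> (nat \<Rightarrow> nat) \<Rightarrow> (nat \<Rightarrow> nat \<Rightarrow> real mat) \<Rightarrow> nat \<Rightarrow> real mat" where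
  "XgeT d n r G 0 = 1\<^sub>m 1"
| "XgeT d n r G (Suc m) = rightU r n G (d - m) * kron (XgeT d n r G m) (1\<^sub>m (n (d - m)))"

text \<open>Right interface matrix X_{>= k}, for 1 <= k <= d+1.\<close>
definition Xge :: "nat \<Rightarrow> (nat \<Rightarrow> nat) \<Rightarrow> (nat \<Rightarrow> nat) \<Rightarrow> (nat \<Rightarrow> nat \<Rightarrow> real mat) \<Rightarrow> nat \<Rightarrow> real mat" where
  "Xge d n r G k = transpose_mat (XgeT d n r G (d + 1 - k))"

definition left_orth :: "nat \<Rightarrow> (nat \<Rightarrow> nat) \<Rightarrow> (nat \<Rightarrow> nat) \<Rightarrow> (nat \<Rightarrow> nat \<Rightarrow> real mat) \<Rightarrow> bool" where
  "left_orth d n r G \<longleftrightarrow> (\<forall>k\<in>{1..d-1}. transpose_mat (leftU r n G k) * leftU r n G k = 1\<^sub>m (r k))"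

definition right_orth :: "nat \<Rightarrow> (nat \<Rightarrow> nat) \<Rightarrow> (nat \<Rightarrow> nat) \<Rightarrow> (nat \<Rightarrow> nat \<Rightarrow> real mat) \<Rightarrow> bool" where
  "right_orth d n r G \<longleftrightarrow> (\<forall>k\<in>{2..d}. rightU r n G k * transpose_mat (rightU r n G k) = 1\<^sub>m (r (k-1)))"

text \<open>Gauge relation produced by right-orthogonalisation: there are invertible S k
  (S 0 = S d = 1) with Gt k i = (S (k-1))^{-1} * G k i * S k.\<close>
definition gauge_related :: "nat \<Rightarrow> (nat \<Rightarrow> nat) \<Rightarrow> (nat \<Rightarrow> nat) \<Rightarrow> (nat \<Rightarrow> nat \<Rightarrow> real mat) \<Rightarrow> (nat \<Rightarrow> nat \<Rightarrow> real mat) \<Rightarrow> bool" where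
  "gauge_related d n r G Gt \<longleftrightarrow> (\<exists>S :: nat \<Rightarrow> real mat. S 0 = 1\<^sub>m 1 \<and> S d = 1\<^sub>m 1 \<and>
     (\<forall>k\<in>{1..d-1}. S k \<in> carrier_mat (r k) (r k) \<and> invertible_mat (S k)) \<and>
     (\<forall>k\<in>{1..d}. \<forall>i<n k. G k i * S k = S (k-1) * Gt k i))"

definition tangent_repr :: "nat \<Rightarrow> (nat \<Rightarrow> nat) \<Rightarrow> (nat \<Rightarrow> nat \<Rightarrow> real mat) \<Rightarrow> (nat \<Rightarrow> nat \<Rightarrow> real mat)
     \<Rightarrow> (nat \<Rightarrow> nat \<Rightarrow> real mat) \<Rightarrow> ((nat \<Rightarrow> nat) \<Rightarrow> real) \<Rightarrow> bool" where
  "tangent_repr d n G H dV V \<longleftrightarrow> (\<forall>i\<in>tt_index d n. V i =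
     (\<Sum>k=1..d. mprod 1 (map (\<lambda>j. G j (i j)) [1..<k] @ [dV k (i k)] @ map (\<lambda>j. H j (i j)) [k+1..<d+1]) $$ (0, 0)))"

definition gauge_cond :: "nat \<Rightarrow> (nat \<Rightarrow> nat) \<Rightarrow> (nat \<Rightarrow> nat) \<Rightarrow> (nat \<Rightarrow> nat \<Rightarrow> real mat) \<Rightarrow> (nat \<Rightarrow> nat \<Rightarrow> real mat) \<Rightarrow> bool" where
  "gauge_cond d n r G dV \<longleftrightarrow> (\<forall>k\<in>{1..d-1}. transpose_mat (leftU r n dV k) * leftU r n G k = 0\<^sub>m (r k) (r k))"

end

theory Submission
  imports Defs
begin

text \<open>
  The gauge relation U_k(x) S_k = S_(k-1) Ut_k(x) gives S_k Ut_(k+1)(i_(k+1)) ... Ut_d(i_d) =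
  U_(k+1)(i_(k+1)) ... U_d(i_d), so subtracting the two representations of V shows that the cores
  W_k = dV_k S_k - dVt_k, which again satisfy the gauge condition, represent the zero tensor with
  left cores U and right cores Ut.  Such a representation is trivial.  Write T_a(i) for the partial
  sum of its terms with k >= a, after the common prefix U_1(i_1) ... U_(a-1)(i_(a-1)) is removed.
  If T_a vanishes identically, contracting over (i_a, alpha) with the columns of W_a kills the part
  of T_a involving T_(a+1), by the gauge condition, and leaves the Gram matrix of W_a applied to the
  rows of X_(>=a+1) of Ut, which are orthonormal; hence W_a = 0.  Contracting with U_a instead
  gives T_(a+1) = 0 by left-orthogonality.  So dVt_k = dV_k S_k, and S_k = R_k^T because
  X_(>=k+1) = S_k Xt_(>=k+1) and Xt_(>=k+1) has orthonormal rows.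
\<close>

lemma sum_lessThan_mult:
  fixes f :: "nat \<Rightarrow> 'a::comm_monoid_add"
  shows "(\<Sum>l<a * b. f l) = (\<Sum>x<b. \<Sum>y<a. f (y + a * x))"
proof (induction b)
  case 0
  then show ?case by simp
next
  case (Suc b)
  have "{..<a * Suc b} = {..<a * b} \<union> {a * b..<a * b + a}" by auto
  then have "(\<Sum>l<a * Suc b. f l) = (\<Sum>l<a * b. f l) + (\<Sum>l\<in>{a * b..<a * b + a}. f l)"
    by (simp add: sum.union_disjoint ivl_disj_int)
  also have "(\<Sum>l\<in>{a * b..<a * b + a}. f l) = (\<Sum>y<a. f (y + a * b))"
    using sum.shift_bounds_nat_ivl[of f 0 "a * b" a] by (simp add: lessThan_atLeast0 add.commute)
  finally show ?case using Suc by simp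
qed

lemma add_mult_less_mult:
  fixes a b x y :: nat
  assumes "y < a" "x < b"
  shows "y + a * x < a * b"
proof -
  have "y + a * x < a * Suc x" using assms(1) by simp
  also have "\<dots> \<le> a * b" using assms(2) by (intro mult_le_mono2) simp
  finally show ?thesis .
qed

lemma sum_sum_mult_sum_swap:
  fixes f :: "'i \<Rightarrow> 'j \<Rightarrow> 'a::comm_semiring_0" and g :: "'i \<Rightarrow> 'j \<Rightarrow> 'k \<Rightarrow> 'a"
  shows "(\<Sum>x\<in>A. \<Sum>\<alpha>\<in>B. f x \<alpha> * (\<Sum>\<delta>\<in>C. g x \<alpha> \<delta> * h \<delta>))
       = (\<Sum>\<delta>\<in>C. (\<Sum>x\<in>A. \<Sum>\<alpha>\<in>B. f x \<alpha> * g x \<alpha> \<delta>) * h \<delta>)"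
proof -
  have "(\<Sum>x\<in>A. \<Sum>\<alpha>\<in>B. f x \<alpha> * (\<Sum>\<delta>\<in>C. g x \<alpha> \<delta> * h \<delta>))
      = (\<Sum>x\<in>A. \<Sum>\<alpha>\<in>B. \<Sum>\<delta>\<in>C. f x \<alpha> * g x \<alpha> \<delta> * h \<delta>)"
    by (simp add: sum_distrib_left mult.assoc)
  also have "\<dots> = (\<Sum>\<delta>\<in>C. \<Sum>x\<in>A. \<Sum>\<alpha>\<in>B. f x \<alpha> * g x \<alpha> \<delta> * h \<delta>)"
    by (subst sum.swap, rule sum.cong[OF refl], rule sum.swap)
  finally show ?thesis by (simp add: sum_distrib_right)
qed

lemma sum_sum_squares_eq_0D:
  fixes f :: "'i \<Rightarrow> 'j \<Rightarrow> real"
  assumes "finite A" "finite B" "(\<Sum>x\<in>A. \<Sum>\<alpha>\<in>B. f x \<alpha> * f x \<alpha>) = 0" "x \<in> A" "\<alpha> \<in> B"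
  shows "f x \<alpha> = 0"
proof -
  have "(\<Sum>\<alpha>\<in>B. f x \<alpha> * f x \<alpha>) = 0"
    using assms sum_nonneg_eq_0_iff[of A "\<lambda>x. \<Sum>\<alpha>\<in>B. f x \<alpha> * f x \<alpha>"] by (simp add: sum_nonneg)
  then show ?thesis using assms sum_nonneg_eq_0_iff[of B "\<lambda>\<alpha>. f x \<alpha> * f x \<alpha>"] by simp
qed

lemma index_mult_mat_sum:
  assumes "i < dim_row A" "j < dim_col B" "dim_row B = dim_col A"
  shows "(A * B) $$ (i, j) = (\<Sum>l<dim_col A. A $$ (i, l) * B $$ (l, j))"
  using assms by (simp add: scalar_prod_def lessThan_atLeast0)

lemma minus_mat_eq_0D:
  fixes A B :: "'a::ab_group_add mat"
  assumes A: "A \<in> carrier_mat p q" and B: "B \<in> carrier_mat p q" and AB: "A - B = 0\<^sub>m p q"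
  shows "A = B"
proof (rule eq_matI)
  fix i j assume ij: "i < dim_row B" "j < dim_col B"
  then have "(A - B) $$ (i, j) = 0" using AB B by simp
  then show "A $$ (i, j) = B $$ (i, j)" using ij by simp
qed (use A B in auto)

lemma orthonormal_rows_factor_eq_transpose:
  fixes X Y S R :: "'a::comm_ring_1 mat"
  assumes Y: "Y \<in> carrier_mat p q" and S: "S \<in> carrier_mat p p" and R: "R \<in> carrier_mat p p"
    and orth: "Y * transpose_mat Y = 1\<^sub>m p"
    and X: "X = S * Y" and XR: "transpose_mat X = transpose_mat Y * R"
  shows "R = transpose_mat S"
proof -
  have YT: "transpose_mat Y \<in> carrier_mat q p" and ST: "transpose_mat S \<in> carrier_mat p p"
    using Y S by auto
  have "R = (Y * transpose_mat Y) * R" using orth R by simp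
  also have "\<dots> = Y * (transpose_mat Y * R)" by (rule assoc_mult_mat[OF Y YT R])
  also have "\<dots> = Y * (transpose_mat Y * transpose_mat S)" using XR X transpose_mult[OF S Y] by simp
  also have "\<dots> = (Y * transpose_mat Y) * transpose_mat S" by (rule assoc_mult_mat[OF Y YT ST, symmetric])
  also have "\<dots> = transpose_mat S" using orth ST by simp
  finally show ?thesis .
qed

lemma mult_gauge_diff:
  fixes P A B S Q Qt :: "'a::comm_ring_1 mat"
  assumes P: "P \<in> carrier_mat a b" and A: "A \<in> carrier_mat b c" and B: "B \<in> carrier_mat b c"
    and S: "S \<in> carrier_mat c c" and Q: "Q \<in> carrier_mat c e" and Qt: "Qt \<in> carrier_mat c e"
    and SQ: "S * Qt = Q"
  shows "P * ((A * S - B) * Qt) = P * (A * Q) - P * (B * Qt)"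
proof -
  have "(A * S - B) * Qt = A * Q - B * Qt"
    using A B S Qt by (simp add: minus_mult_distrib_mat[of _ b c] SQ[symmetric])
  then show ?thesis using mult_minus_distrib_mat[OF P mult_carrier_mat[OF A Q] mult_carrier_mat[OF B Qt]] by simp
qed

lemma kron_one_mult_transpose:
  assumes A: "A \<in> carrier_mat a c" and B: "B \<in> carrier_mat b c"
  shows "kron A (1\<^sub>m p) * transpose_mat (kron B (1\<^sub>m p)) = kron (A * transpose_mat B) (1\<^sub>m p)"
proof (rule eq_matI)
  fix i j
  assume "i < dim_row (kron (A * transpose_mat B) (1\<^sub>m p))" "j < dim_col (kron (A * transpose_mat B) (1\<^sub>m p))"
  then have i: "i < a * p" and j: "j < b * p" using A B by (auto simp: kron_def)
  then have p: "0 < p" by (cases p) auto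
  have idiv: "i div p < a" and jdiv: "j div p < b"
    using i j by (auto simp: less_mult_imp_div_less)
  let ?KA = "kron A (1\<^sub>m p)" and ?KB = "kron B (1\<^sub>m p)"
  have "(?KA * transpose_mat ?KB) $$ (i, j) = (\<Sum>l<c * p. ?KA $$ (i, l) * ?KB $$ (j, l))"
    using i j A B by (subst index_mult_mat_sum) (auto simp: kron_def)
  also have "\<dots> = (\<Sum>x<c. \<Sum>y<p. ?KA $$ (i, y + p * x) * ?KB $$ (j, y + p * x))"
    using sum_lessThan_mult[of _ p c] by (simp add: mult.commute)
  also have "\<dots> = (\<Sum>x<c. \<Sum>y<p. (A $$ (i div p, x) * B $$ (j div p, x))
                     * (if y = i mod p then if y = j mod p then 1 else 0 else 0))"
  proof (intro sum.cong refl)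
    fix x y assume "x \<in> {..<c}" "y \<in> {..<p}"
    moreover from this have "y + p * x < c * p" using add_mult_less_mult[of y p x c] by (simp add: mult.commute)
    ultimately show "?KA $$ (i, y + p * x) * ?KB $$ (j, y + p * x)
        = (A $$ (i div p, x) * B $$ (j div p, x)) * (if y = i mod p then if y = j mod p then 1 else 0 else 0)"
      using i j A B p by (auto simp: kron_def)
  qed
  also have "\<dots> = (\<Sum>x<c. A $$ (i div p, x) * B $$ (j div p, x)) * (if i mod p = j mod p then 1 else 0)"
    using p by (simp add: sum_distrib_right if_distrib[of "\<lambda>t. _ * t"] cong: if_cong)
  also have "\<dots> = kron (A * transpose_mat B) (1\<^sub>m p) $$ (i, j)"
    using i j A B idiv jdiv p by (simp add: kron_def scalar_prod_def lessThan_atLeast0)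
  finally show "(?KA * transpose_mat ?KB) $$ (i, j) = kron (A * transpose_mat B) (1\<^sub>m p) $$ (i, j)" .
qed (use A B in \<open>auto simp: kron_def\<close>)

lemma kron_one_one: "kron (1\<^sub>m a) (1\<^sub>m p) = 1\<^sub>m (a * p)"
proof (rule eq_matI)
  fix i j assume "i < dim_row (1\<^sub>m (a * p))" "j < dim_col (1\<^sub>m (a * p))"
  then have "i < a * p" "j < a * p" by auto
  moreover from this have "0 < p" by (cases p) auto
  moreover have "i = j \<longleftrightarrow> i div p = j div p \<and> i mod p = j mod p"
    by (metis div_mult_mod_eq)
  ultimately show "kron (1\<^sub>m a) (1\<^sub>m p) $$ (i, j) = 1\<^sub>m (a * p) $$ (i, j)"
    by (auto simp: kron_def less_mult_imp_div_less)
qed (auto simp: kron_def)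

section \<open>Products of TT cores\<close>

lemma colex_decode_self: "colex_decode n k q k = q mod n k"
  by (simp add: colex_decode_def)

lemma colex_decode_Suc: "k < j \<Longrightarrow> colex_decode n k q j = colex_decode n (Suc k) (q div n k) j"
  by (simp add: colex_decode_def prod.atLeast_Suc_lessThan div_mult2_eq)

lemma colex_decode_less: "0 < n j \<Longrightarrow> colex_decode n k q j < n j"
  by (simp add: colex_decode_def)

definition core_prod :: "(nat \<Rightarrow> nat) \<Rightarrow> (nat \<Rightarrow> nat \<Rightarrow> real mat) \<Rightarrow> (nat \<Rightarrow> nat) \<Rightarrow> nat \<Rightarrow> nat \<Rightarrow> real mat" where
  "core_prod r G i a b = mprod (r (a - 1)) (map (\<lambda>j. G j (i j)) [a..<b])"

lemma core_prod_empty [simp]: "core_prod r G i a a = 1\<^sub>m (r (a - 1))"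
  by (simp add: core_prod_def)

lemma core_prod_Cons:
  assumes "a < b" and "G a (i a) \<in> carrier_mat (r (a - 1)) (r a)"
  shows "core_prod r G i a b = G a (i a) * core_prod r G i (Suc a) b"
  using assms by (simp add: core_prod_def upt_conv_Cons)

lemma core_prod_cong:
  "(\<And>j. a \<le> j \<Longrightarrow> j < b \<Longrightarrow> i j = i' j) \<Longrightarrow> core_prod r G i a b = core_prod r G i' a b"
  unfolding core_prod_def by (intro arg_cong[where f = "mprod _"] map_cong) auto

lemma core_dims_carrier:
  "core_dims d n r G \<Longrightarrow> k \<in> {1..d} \<Longrightarrow> x < n k \<Longrightarrow> G k x \<in> carrier_mat (r (k - 1)) (r k)"
  by (simp add: core_dims_def)

lemma core_prod_carrier:
  assumes "core_dims d n r G" and "1 \<le> a" "a \<le> b" "b \<le> Suc d" and "\<forall>j\<in>{a..<b}. i j < n j"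
  shows "core_prod r G i a b \<in> carrier_mat (r (a - 1)) (r (b - 1))"
  using assms(2-5)
proof (induction "b - a" arbitrary: a)
  case 0
  then show ?case by simp
next
  case (Suc x)
  have G: "G a (i a) \<in> carrier_mat (r (a - 1)) (r a)"
    using Suc.hyps(2) Suc.prems by (intro core_dims_carrier[OF assms(1)]) auto
  have "core_prod r G i (Suc a) b \<in> carrier_mat (r a) (r (b - 1))"
    using Suc.hyps(1)[of "Suc a"] Suc.hyps(2) Suc.prems by auto
  then show ?case using Suc.hyps(2) core_prod_Cons[of a b G i r, OF _ G] G by simp
qed

lemma mprod_map_append:
  assumes "core_dims d n r G" and "1 \<le> a" "a \<le> k" "k \<le> Suc d" and "\<forall>j\<in>{a..<k}. i j < n j"
    and rest: "mprod (r (k - 1)) rest \<in> carrier_mat (r (k - 1)) c"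
  shows "mprod (r (a - 1)) (map (\<lambda>j. G j (i j)) [a..<k] @ rest)
       = core_prod r G i a k * mprod (r (k - 1)) rest"
  using assms(2-5)
proof (induction "k - a" arbitrary: a)
  case 0
  then show ?case using rest by (simp add: core_prod_def)
next
  case (Suc x)
  then have "a < k" by simp
  have G: "G a (i a) \<in> carrier_mat (r (a - 1)) (r a)"
    using Suc.prems \<open>a < k\<close> by (intro core_dims_carrier[OF assms(1)]) auto
  have P: "core_prod r G i (Suc a) k \<in> carrier_mat (r a) (r (k - 1))"
    using core_prod_carrier[OF assms(1), of "Suc a" k i] Suc.prems \<open>a < k\<close> by auto
  have IH: "mprod (r a) (map (\<lambda>j. G j (i j)) [Suc a..<k] @ rest)
      = core_prod r G i (Suc a) k * mprod (r (k - 1)) rest"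
    using Suc.hyps(1)[of "Suc a"] Suc.hyps(2) Suc.prems \<open>a < k\<close> by auto
  have "mprod (r (a - 1)) (map (\<lambda>j. G j (i j)) [a..<k] @ rest)
      = G a (i a) * mprod (r a) (map (\<lambda>j. G j (i j)) [Suc a..<k] @ rest)"
    using \<open>a < k\<close> G by (simp add: upt_conv_Cons)
  also have "\<dots> = core_prod r G i a k * mprod (r (k - 1)) rest"
    unfolding IH core_prod_Cons[of a k G i r, OF \<open>a < k\<close> G] using G P rest by simp
  finally show ?case .
qed

lemma tangent_term_eq:
  assumes "core_dims d n r G" "core_dims d n r H" "core_dims d n r D" "r 0 = 1" "r d = 1"
    and i: "i \<in> tt_index d n" and k: "k \<in> {1..d}"
  shows "mprod 1 (map (\<lambda>j. G j (i j)) [1..<k] @ [D k (i k)] @ map (\<lambda>j. H j (i j)) [k+1..<d+1])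
       = core_prod r G i 1 k * (D k (i k) * core_prod r H i (Suc k) (Suc d))"
proof -
  have idx: "\<forall>j\<in>{1..d}. i j < n j" using i by (simp add: tt_index_def)
  have D: "D k (i k) \<in> carrier_mat (r (k - 1)) (r k)"
    using k idx by (intro core_dims_carrier[OF assms(3)]) auto
  have Q: "core_prod r H i (Suc k) (Suc d) \<in> carrier_mat (r k) 1"
    using core_prod_carrier[OF assms(2), of "Suc k" "Suc d" i] k idx \<open>r d = 1\<close> by auto
  have rest: "mprod (r (k - 1)) (D k (i k) # map (\<lambda>j. H j (i j)) [Suc k..<Suc d])
      = D k (i k) * core_prod r H i (Suc k) (Suc d)"
    using D by (simp add: core_prod_def)
  have rest_carrier: "mprod (r (k - 1)) (D k (i k) # map (\<lambda>j. H j (i j)) [Suc k..<Suc d]) \<in> carrier_mat (r (k - 1)) 1"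
    unfolding rest using D Q by simp
  have "mprod (r (1 - 1)) (map (\<lambda>j. G j (i j)) [1..<k] @ (D k (i k) # map (\<lambda>j. H j (i j)) [Suc k..<Suc d]))
      = core_prod r G i 1 k * (D k (i k) * core_prod r H i (Suc k) (Suc d))"
    unfolding rest[symmetric] using k idx by (intro mprod_map_append[OF assms(1) _ _ _ _ rest_carrier]) auto
  then show ?thesis using \<open>r 0 = 1\<close> by (simp del: upt_Suc)
qed

lemma core_prod_gauge:
  assumes cU: "core_dims d n r U" and cUt: "core_dims d n r Ut"
    and S: "\<forall>k\<le>d. S k \<in> carrier_mat (r k) (r k)"
    and gauge: "\<forall>k\<in>{1..d}. \<forall>x<n k. U k x * S k = S (k - 1) * Ut k x"
    and "1 \<le> a" "a \<le> b" "b \<le> Suc d" "\<forall>j\<in>{a..<b}. i j < n j"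
  shows "core_prod r U i a b * S (b - 1) = S (a - 1) * core_prod r Ut i a b"
  using assms(5-8)
proof (induction "b - a" arbitrary: a)
  case 0
  then have "a = b" by simp
  moreover have "S (a - 1) \<in> carrier_mat (r (a - 1)) (r (a - 1))" using S 0 by simp
  ultimately show ?case by simp
next
  case (Suc x)
  then have ab: "a < b" and a: "a \<in> {1..d}" and x: "i a < n a" by auto
  let ?P = "core_prod r U i (Suc a) b" and ?Pt = "core_prod r Ut i (Suc a) b"
  have Ua: "U a (i a) \<in> carrier_mat (r (a - 1)) (r a)" by (rule core_dims_carrier[OF cU a x])
  have Uta: "Ut a (i a) \<in> carrier_mat (r (a - 1)) (r a)" by (rule core_dims_carrier[OF cUt a x])
  have P: "?P \<in> carrier_mat (r a) (r (b - 1))" and Pt: "?Pt \<in> carrier_mat (r a) (r (b - 1))"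
    using core_prod_carrier[OF cU, of "Suc a" b i] core_prod_carrier[OF cUt, of "Suc a" b i] Suc.prems ab
    by auto
  have Sa1: "S (a - 1) \<in> carrier_mat (r (a - 1)) (r (a - 1))" using S a by auto
  have Sa: "S a \<in> carrier_mat (r a) (r a)" and Sb: "S (b - 1) \<in> carrier_mat (r (b - 1)) (r (b - 1))"
    using S a Suc.prems by auto
  have IH: "?P * S (b - 1) = S a * ?Pt"
    using Suc.hyps(1)[of "Suc a"] Suc.hyps(2) Suc.prems ab by auto
  have "core_prod r U i a b * S (b - 1) = U a (i a) * (?P * S (b - 1))"
    using core_prod_Cons[of a b U i r, OF ab Ua] Ua P Sb by simp
  also have "\<dots> = (U a (i a) * S a) * ?Pt"
    unfolding IH using Ua Sa Pt by simp
  also have "\<dots> = (S (a - 1) * Ut a (i a)) * ?Pt"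
    using gauge a x by simp
  also have "\<dots> = S (a - 1) * (Ut a (i a) * ?Pt)"
    by (rule assoc_mult_mat[OF Sa1 Uta Pt])
  also have "\<dots> = S (a - 1) * core_prod r Ut i a b"
    using core_prod_Cons[of a b Ut i r, OF ab Uta] by simp
  finally show ?case .
qed

section \<open>Right interface matrices\<close>

lemma dim_row_XgeT: "r d = 1 \<Longrightarrow> dim_row (XgeT d n r G m) = r (d - m)"
  by (induction m) (auto simp: rightU_def)

lemma dim_col_XgeT: "dim_col (XgeT d n r G m) = (\<Prod>j<m. n (d - j))"
  by (induction m) (auto simp: kron_def)

lemma XgeT_carrier: "r d = 1 \<Longrightarrow> XgeT d n r G m \<in> carrier_mat (r (d - m)) (\<Prod>j<m. n (d - j))"
  by (simp add: dim_row_XgeT dim_col_XgeT carrier_matI)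

lemma XgeT_orthonormal:
  assumes rd: "r d = 1" and ro: "right_orth d n r G" and "m < d"
  shows "XgeT d n r G m * transpose_mat (XgeT d n r G m) = 1\<^sub>m (r (d - m))"
  using \<open>m < d\<close>
proof (induction m)
  case 0
  then show ?case using rd by simp
next
  case (Suc m)
  define k where "k = d - m"
  let ?X = "XgeT d n r G m" and ?R = "rightU r n G k" and ?c = "\<Prod>j<m. n (d - j)"
  let ?K = "kron ?X (1\<^sub>m (n k))"
  have k: "k \<in> {2..d}" "d - Suc m = k - 1" using Suc.prems k_def by auto
  have X: "?X \<in> carrier_mat (r k) ?c" using XgeT_carrier[of r d, OF rd] k_def by simp
  have R: "?R \<in> carrier_mat (r (k - 1)) (r k * n k)" by (simp add: rightU_def mult.commute)
  have K: "?K \<in> carrier_mat (r k * n k) (?c * n k)" using X by (simp add: kron_def)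
  have KT: "transpose_mat ?K \<in> carrier_mat (?c * n k) (r k * n k)" using K by simp
  have RT: "transpose_mat ?R \<in> carrier_mat (r k * n k) (r (k - 1))" using R by simp
  have "XgeT d n r G (Suc m) * transpose_mat (XgeT d n r G (Suc m)) = (?R * ?K) * (transpose_mat ?K * transpose_mat ?R)"
    using transpose_mult[OF R K] by (simp add: k_def)
  also have "\<dots> = ?R * (?K * (transpose_mat ?K * transpose_mat ?R))"
    by (rule assoc_mult_mat[OF R K mult_carrier_mat[OF KT RT]])
  also have "\<dots> = ?R * ((?K * transpose_mat ?K) * transpose_mat ?R)"
    by (simp only: assoc_mult_mat[OF K KT RT])
  also have "?K * transpose_mat ?K = 1\<^sub>m (r k * n k)"
    using kron_one_mult_transpose[OF X X] Suc k_def by (simp add: kron_one_one)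
  also have "?R * (1\<^sub>m (r k * n k) * transpose_mat ?R) = ?R * transpose_mat ?R"
    using R by simp
  also have "\<dots> = 1\<^sub>m (r (k - 1))"
    using ro k by (simp add: right_orth_def)
  finally show ?case using k by simp
qed

lemma index_XgeT_Suc:
  assumes rd: "r d = 1" and "m < d" and nk: "0 < n (d - m)"
    and \<alpha>: "\<alpha> < r (d - m - 1)" and q: "q < dim_col (XgeT d n r G m) * n (d - m)"
  shows "XgeT d n r G (Suc m) $$ (\<alpha>, q)
       = (\<Sum>\<beta><r (d - m). G (d - m) (q mod n (d - m)) $$ (\<alpha>, \<beta>) * XgeT d n r G m $$ (\<beta>, q div n (d - m)))"
proof -
  define k where "k = d - m"
  let ?X = "XgeT d n r G m" and ?R = "rightU r n G k" and ?I = "1\<^sub>m (n k)"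
  have X: "dim_row ?X = r k" using dim_row_XgeT[of r d] rd k_def by simp
  have qdiv: "q div n k < dim_col ?X" and qmod: "q mod n k < n k"
    using q nk k_def by (auto simp: less_mult_imp_div_less)
  have "XgeT d n r G (Suc m) $$ (\<alpha>, q) = (\<Sum>l<n k * r k. ?R $$ (\<alpha>, l) * kron ?X ?I $$ (l, q))"
    using \<alpha> q X by (subst XgeT.simps, subst index_mult_mat_sum) (auto simp: rightU_def kron_def k_def mult.commute)
  also have "\<dots> = (\<Sum>\<beta><r k. \<Sum>y<n k. ?R $$ (\<alpha>, y + n k * \<beta>) * kron ?X ?I $$ (y + n k * \<beta>, q))"
    by (rule sum_lessThan_mult)
  also have "\<dots> = (\<Sum>\<beta><r k. \<Sum>y<n k. G k y $$ (\<alpha>, \<beta>) * (?X $$ (\<beta>, q div n k) * (if y = q mod n k then 1 else 0)))"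
  proof (intro sum.cong refl)
    fix \<beta> y assume "\<beta> \<in> {..<r k}" "y \<in> {..<n k}"
    moreover from this have "y + n k * \<beta> < n k * r k" by (simp add: add_mult_less_mult)
    ultimately show "?R $$ (\<alpha>, y + n k * \<beta>) * kron ?X ?I $$ (y + n k * \<beta>, q)
        = G k y $$ (\<alpha>, \<beta>) * (?X $$ (\<beta>, q div n k) * (if y = q mod n k then 1 else 0))"
      using \<alpha> q X qdiv qmod by (auto simp: rightU_def kron_def k_def mult.commute)
  qed
  also have "\<dots> = (\<Sum>\<beta><r k. G k (q mod n k) $$ (\<alpha>, \<beta>) * ?X $$ (\<beta>, q div n k))"
    using qmod by (simp add: if_distrib[of "\<lambda>x. _ * x"] cong: if_cong)
  finally show ?thesis unfolding k_def .
qed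

lemma index_XgeT:
  assumes rd: "r d = 1" and cG: "core_dims d n r G" and np: "\<forall>j\<in>{1..d}. 0 < n j"
  shows "m < d \<Longrightarrow> \<alpha> < r (d - m) \<Longrightarrow> q < dim_col (XgeT d n r G m) \<Longrightarrow>
    XgeT d n r G m $$ (\<alpha>, q) = core_prod r G (colex_decode n (Suc (d - m)) q) (Suc (d - m)) (Suc d) $$ (\<alpha>, 0)"
proof (induction m arbitrary: \<alpha> q)
  case 0
  then show ?case using rd by simp
next
  case (Suc m)
  define k where "k = d - m"
  let ?c = "colex_decode n k q" and ?c' = "colex_decode n (Suc k) (q div n k)"
  have k: "k \<in> {2..d}" "d - Suc m = k - 1" "Suc (k - 1) = k" using Suc.prems k_def by auto
  have nk: "0 < n k" using np k by auto
  have \<alpha>: "\<alpha> < r (k - 1)" using Suc.prems(2) k(2) by simp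
  have q: "q < dim_col (XgeT d n r G m) * n k" using Suc.prems(3) k_def by (simp add: kron_def)
  have G: "G k (q mod n k) \<in> carrier_mat (r (k - 1)) (r k)"
    using k nk by (intro core_dims_carrier[OF cG]) auto
  have P: "core_prod r G ?c' (Suc k) (Suc d) \<in> carrier_mat (r k) 1"
    using core_prod_carrier[OF cG, of "Suc k" "Suc d" ?c'] k np rd by (auto simp: colex_decode_less)
  have "XgeT d n r G (Suc m) $$ (\<alpha>, q)
      = (\<Sum>\<beta><r k. G k (q mod n k) $$ (\<alpha>, \<beta>) * XgeT d n r G m $$ (\<beta>, q div n k))"
    unfolding k_def by (rule index_XgeT_Suc[of r d, OF rd]) (use Suc.prems(1) nk \<alpha> q in \<open>simp_all add: k_def\<close>)
  also have "\<dots> = (\<Sum>\<beta><r k. G k (q mod n k) $$ (\<alpha>, \<beta>) * core_prod r G ?c' (Suc k) (Suc d) $$ (\<beta>, 0))"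
    using Suc.IH Suc.prems q k_def by (intro sum.cong refl) (auto simp: less_mult_imp_div_less)
  also have "\<dots> = (G k (q mod n k) * core_prod r G ?c' (Suc k) (Suc d)) $$ (\<alpha>, 0)"
    using G P \<alpha> by (simp add: scalar_prod_def lessThan_atLeast0)
  also have "core_prod r G ?c' (Suc k) (Suc d) = core_prod r G ?c (Suc k) (Suc d)"
    by (rule core_prod_cong) (simp add: colex_decode_Suc)
  also have "G k (q mod n k) * core_prod r G ?c (Suc k) (Suc d) = core_prod r G ?c k (Suc d)"
    using core_prod_Cons[of k "Suc d" G ?c r] G k by (simp add: colex_decode_self)
  finally show ?case using k by simp
qed

lemma XgeT_gauge:
  assumes rd: "r d = 1" and cU: "core_dims d n r U" and cUt: "core_dims d n r Ut"
    and np: "\<forall>j\<in>{1..d}. 0 < n j"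
    and S: "\<forall>k\<le>d. S k \<in> carrier_mat (r k) (r k)" and Sd: "S d = 1\<^sub>m 1"
    and gauge: "\<forall>k\<in>{1..d}. \<forall>x<n k. U k x * S k = S (k - 1) * Ut k x"
    and "m < d"
  shows "XgeT d n r U m = S (d - m) * XgeT d n r Ut m"
proof -
  define k where "k = d - m"
  let ?c = "\<Prod>j<m. n (d - j)"
  have Sk: "S k \<in> carrier_mat (r k) (r k)" using S k_def by simp
  have X: "XgeT d n r U m \<in> carrier_mat (r k) ?c" and Xt: "XgeT d n r Ut m \<in> carrier_mat (r k) ?c"
    using XgeT_carrier[of r d] rd k_def by auto
  have entry: "XgeT d n r U m $$ (\<alpha>, q) = (S k * XgeT d n r Ut m) $$ (\<alpha>, q)" if \<alpha>: "\<alpha> < r k" and q: "q < ?c" for \<alpha> q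
  proof -
    let ?i = "colex_decode n (Suc k) q"
    have idx: "\<forall>j\<in>{Suc k..<Suc d}. ?i j < n j" using np by (auto simp: colex_decode_less)
    have P: "core_prod r U ?i (Suc k) (Suc d) \<in> carrier_mat (r k) 1"
      and Pt: "core_prod r Ut ?i (Suc k) (Suc d) \<in> carrier_mat (r k) 1"
      using core_prod_carrier[OF cU, of "Suc k" "Suc d" ?i] core_prod_carrier[OF cUt, of "Suc k" "Suc d" ?i]
        idx rd k_def by auto
    have "XgeT d n r U m $$ (\<alpha>, q) = core_prod r U ?i (Suc k) (Suc d) $$ (\<alpha>, 0)"
      using index_XgeT[OF rd cU np \<open>m < d\<close>] \<alpha> q X k_def by auto
    also have "core_prod r U ?i (Suc k) (Suc d) = S k * core_prod r Ut ?i (Suc k) (Suc d)"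
      using core_prod_gauge[OF cU cUt S gauge, of "Suc k" "Suc d" ?i] idx Sd P rd k_def by simp
    also have "(S k * core_prod r Ut ?i (Suc k) (Suc d)) $$ (\<alpha>, 0)
        = (\<Sum>\<beta><r k. S k $$ (\<alpha>, \<beta>) * core_prod r Ut ?i (Suc k) (Suc d) $$ (\<beta>, 0))"
      using Sk Pt \<alpha> by (simp add: scalar_prod_def lessThan_atLeast0)
    also have "\<dots> = (\<Sum>\<beta><r k. S k $$ (\<alpha>, \<beta>) * XgeT d n r Ut m $$ (\<beta>, q))"
      using index_XgeT[OF rd cUt np \<open>m < d\<close>] q Xt k_def by auto
    also have "\<dots> = (S k * XgeT d n r Ut m) $$ (\<alpha>, q)"
      using Sk Xt \<alpha> q by (simp add: scalar_prod_def lessThan_atLeast0)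
    finally show ?thesis .
  qed
  show ?thesis
  proof (rule eq_matI)
    fix \<alpha> q assume "\<alpha> < dim_row (S (d - m) * XgeT d n r Ut m)" "q < dim_col (S (d - m) * XgeT d n r Ut m)"
    then show "XgeT d n r U m $$ (\<alpha>, q) = (S (d - m) * XgeT d n r Ut m) $$ (\<alpha>, q)"
      using entry Sk Xt unfolding k_def by simp
  qed (use X Xt Sk in \<open>simp_all add: k_def\<close>)
qed

lemma core_prod_suffix_rows_independent:
  assumes rd: "r d = 1" and ro: "right_orth d n r G" and cG: "core_dims d n r G"
    and np: "\<forall>j\<in>{1..d}. 0 < n j" and a: "1 \<le> a" "a \<le> d"
    and zero: "\<forall>i\<in>tt_index d n. (\<Sum>\<delta><r a. v \<delta> * core_prod r G i (Suc a) (Suc d) $$ (\<delta>, 0)) = 0"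
    and \<delta>: "\<delta> < r a"
  shows "v \<delta> = 0"
proof -
  define m where "m = d - a"
  define X where "X = XgeT d n r G m"
  define w :: "real mat" where "w = mat 1 (r a) (\<lambda>(_, \<delta>). v \<delta>)"
  let ?c = "\<Prod>j<m. n (d - j)"
  have m: "m < d" "d - m = a" using a m_def by auto
  have X: "X \<in> carrier_mat (r a) ?c" using XgeT_carrier[of r d n G m] rd m unfolding X_def by simp
  have w: "w \<in> carrier_mat 1 (r a)" by (simp add: w_def)
  have wX: "w * X = 0\<^sub>m 1 ?c"
  proof (rule eq_matI)
    fix u q assume "u < dim_row (0\<^sub>m 1 ?c)" "q < dim_col (0\<^sub>m 1 ?c)"
    then have u: "u = 0" and q: "q < ?c" by auto
    define i where "i = (\<lambda>j. if j \<in> {Suc a..d} then colex_decode n (Suc a) q j else 0)"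
    have i: "i \<in> tt_index d n" using np a by (auto simp: tt_index_def i_def colex_decode_less)
    have "(w * X) $$ (u, q) = (\<Sum>\<delta><r a. v \<delta> * X $$ (\<delta>, q))"
      using u q w X by (simp add: w_def scalar_prod_def lessThan_atLeast0)
    also have "\<dots> = (\<Sum>\<delta><r a. v \<delta> * core_prod r G i (Suc a) (Suc d) $$ (\<delta>, 0))"
    proof (intro sum.cong refl)
      fix \<delta> assume "\<delta> \<in> {..<r a}"
      moreover have "core_prod r G (colex_decode n (Suc a) q) (Suc a) (Suc d) = core_prod r G i (Suc a) (Suc d)"
        by (rule core_prod_cong) (simp add: i_def)
      ultimately show "v \<delta> * X $$ (\<delta>, q) = v \<delta> * core_prod r G i (Suc a) (Suc d) $$ (\<delta>, 0)"
        using index_XgeT[OF rd cG np m(1), of \<delta> q] q X m unfolding X_def by simp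
    qed
    also have "\<dots> = 0" using zero i by blast
    finally show "(w * X) $$ (u, q) = 0\<^sub>m 1 ?c $$ (u, q)" using u q by simp
  qed (use w X in auto)
  have XT: "transpose_mat X \<in> carrier_mat ?c (r a)" using X by simp
  have "w = w * (X * transpose_mat X)" using XgeT_orthonormal[OF rd ro m(1)] w m by (simp add: X_def)
  also have "\<dots> = (w * X) * transpose_mat X" by (rule assoc_mult_mat[OF w X XT, symmetric])
  also have "\<dots> = 0\<^sub>m 1 (r a)" using wX XT by simp
  finally have "w $$ (0, \<delta>) = 0" using \<delta> by simp
  then show ?thesis using \<delta> by (simp add: w_def)
qed

section \<open>Left unfoldings and the gauge condition\<close>

lemma index_transpose_leftU_mult_leftU:
  assumes "0 < r (k - 1)" "\<gamma> < r k" "\<beta> < r k"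
  shows "(transpose_mat (leftU r n A k) * leftU r n B k) $$ (\<gamma>, \<beta>)
       = (\<Sum>x<n k. \<Sum>\<alpha><r (k - 1). A k x $$ (\<alpha>, \<gamma>) * B k x $$ (\<alpha>, \<beta>))"
proof -
  have "(transpose_mat (leftU r n A k) * leftU r n B k) $$ (\<gamma>, \<beta>)
      = (\<Sum>p<r (k - 1) * n k. leftU r n A k $$ (p, \<gamma>) * leftU r n B k $$ (p, \<beta>))"
    using assms by (subst index_mult_mat_sum) (auto simp: leftU_def)
  also have "\<dots> = (\<Sum>x<n k. \<Sum>\<alpha><r (k - 1).
      leftU r n A k $$ (\<alpha> + r (k - 1) * x, \<gamma>) * leftU r n B k $$ (\<alpha> + r (k - 1) * x, \<beta>))"
    by (rule sum_lessThan_mult)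
  also have "\<dots> = (\<Sum>x<n k. \<Sum>\<alpha><r (k - 1). A k x $$ (\<alpha>, \<gamma>) * B k x $$ (\<alpha>, \<beta>))"
    using assms by (intro sum.cong refl) (simp add: leftU_def add_mult_less_mult)
  finally show ?thesis .
qed

lemma leftU_mult:
  assumes "0 < r (k - 1)" and G: "\<forall>x<n k. G k x \<in> carrier_mat (r (k - 1)) (r k)"
    and S: "S \<in> carrier_mat (r k) (r k)" and G': "\<forall>x<n k. G' k x = G k x * S"
  shows "leftU r n G' k = leftU r n G k * S"
proof (rule eq_matI)
  fix p \<beta> assume "p < dim_row (leftU r n G k * S)" "\<beta> < dim_col (leftU r n G k * S)"
  then have p: "p < r (k - 1) * n k" and \<beta>: "\<beta> < r k" using S by (auto simp: leftU_def)
  then have x: "p div r (k - 1) < n k" by (simp add: less_mult_imp_div_less mult.commute)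
  have "leftU r n G' k $$ (p, \<beta>) = (G k (p div r (k - 1)) * S) $$ (p mod r (k - 1), \<beta>)"
    using p \<beta> G' x by (simp add: leftU_def)
  also have "\<dots> = (\<Sum>\<epsilon><r k. G k (p div r (k - 1)) $$ (p mod r (k - 1), \<epsilon>) * S $$ (\<epsilon>, \<beta>))"
    using G x S \<beta> \<open>0 < r (k - 1)\<close> by (subst index_mult_mat_sum) auto
  also have "\<dots> = (leftU r n G k * S) $$ (p, \<beta>)"
    using p \<beta> S by (subst index_mult_mat_sum) (auto simp: leftU_def)
  finally show "leftU r n G' k $$ (p, \<beta>) = (leftU r n G k * S) $$ (p, \<beta>)" .
qed (use S in \<open>auto simp: leftU_def\<close>)

lemma leftU_minus:
  assumes "0 < r (k - 1)" and B: "\<forall>x<n k. B k x \<in> carrier_mat (r (k - 1)) (r k)"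
    and C: "\<forall>x<n k. C k x = A k x - B k x"
  shows "leftU r n C k = leftU r n A k - leftU r n B k"
proof (rule eq_matI)
  fix p \<beta> assume "p < dim_row (leftU r n A k - leftU r n B k)" "\<beta> < dim_col (leftU r n A k - leftU r n B k)"
  then have p: "p < r (k - 1) * n k" and \<beta>: "\<beta> < r k" by (auto simp: leftU_def)
  then have x: "p div r (k - 1) < n k" by (simp add: less_mult_imp_div_less mult.commute)
  have "p mod r (k - 1) < r (k - 1)" using \<open>0 < r (k - 1)\<close> by simp
  moreover have "B k (p div r (k - 1)) \<in> carrier_mat (r (k - 1)) (r k)" using B x by simp
  ultimately show "leftU r n C k $$ (p, \<beta>) = (leftU r n A k - leftU r n B k) $$ (p, \<beta>)"
    using p \<beta> x C by (simp add: leftU_def)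
qed (auto simp: leftU_def)

lemma gauge_cond_mult_minus:
  assumes r_pos: "\<forall>k\<le>d. 0 < r k" and cA: "core_dims d n r A" and cB: "core_dims d n r B"
    and S: "\<forall>k\<le>d. S k \<in> carrier_mat (r k) (r k)"
    and gA: "gauge_cond d n r U A" and gB: "gauge_cond d n r U B"
  shows "gauge_cond d n r U (\<lambda>k x. A k x * S k - B k x)"
  unfolding gauge_cond_def
proof
  fix k assume k: "k \<in> {1..d - 1}"
  let ?LA = "leftU r n A k" and ?LB = "leftU r n B k" and ?LU = "leftU r n U k"
  have rk: "0 < r (k - 1)" using r_pos k by auto
  have Sk: "S k \<in> carrier_mat (r k) (r k)" using S k by auto
  have LA: "?LA \<in> carrier_mat (r (k - 1) * n k) (r k)" and LB: "?LB \<in> carrier_mat (r (k - 1) * n k) (r k)"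
    and LU: "?LU \<in> carrier_mat (r (k - 1) * n k) (r k)" by (auto simp: leftU_def)
  have L: "leftU r n (\<lambda>k x. A k x * S k - B k x) k = ?LA * S k - ?LB"
  proof -
    have "\<forall>x<n k. A k x \<in> carrier_mat (r (k - 1)) (r k)" "\<forall>x<n k. B k x \<in> carrier_mat (r (k - 1)) (r k)"
      using cA cB k by (auto simp: core_dims_def)
    then show ?thesis
      using leftU_minus[of r k n B "\<lambda>k x. A k x * S k - B k x" "\<lambda>k x. A k x * S k", OF rk]
        leftU_mult[of r k n A "S k" "\<lambda>k x. A k x * S k", OF rk] Sk by simp
  qed
  have "transpose_mat (?LA * S k - ?LB) * ?LU
      = transpose_mat (S k) * (transpose_mat ?LA * ?LU) - transpose_mat ?LB * ?LU"
    using LA LB LU Sk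
    by (simp add: transpose_minus[of _ "r (k - 1) * n k" "r k"] transpose_mult[OF LA Sk]
        minus_mult_distrib_mat[of _ "r k" "r (k - 1) * n k"] assoc_mult_mat[of _ "r k" "r k"])
  also have "\<dots> = 0\<^sub>m (r k) (r k)"
    using gA gB k Sk unfolding gauge_cond_def by simp
  finally show "transpose_mat (leftU r n (\<lambda>k x. A k x * S k - B k x) k) * ?LU = 0\<^sub>m (r k) (r k)"
    unfolding L .
qed

lemma left_orth_sum_eq:
  assumes "left_orth d n r U" "k \<in> {1..d - 1}" "0 < r (k - 1)" "\<gamma> < r k" "\<beta> < r k"
  shows "(\<Sum>x<n k. \<Sum>\<alpha><r (k - 1). U k x $$ (\<alpha>, \<gamma>) * U k x $$ (\<alpha>, \<beta>)) = (if \<gamma> = \<beta> then 1 else 0)"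
  using assms index_transpose_leftU_mult_leftU[of r k \<gamma> \<beta> n U U] by (simp add: left_orth_def)

lemma gauge_cond_sum_eq_0:
  assumes "gauge_cond d n r U W" "k \<in> {1..d - 1}" "0 < r (k - 1)" "\<gamma> < r k" "\<beta> < r k"
  shows "(\<Sum>x<n k. \<Sum>\<alpha><r (k - 1). W k x $$ (\<alpha>, \<gamma>) * U k x $$ (\<alpha>, \<beta>)) = 0"
  using assms index_transpose_leftU_mult_leftU[of r k \<gamma> \<beta> n W U] by (simp add: gauge_cond_def)

section \<open>Uniqueness of gauged tangent representations\<close>

text \<open>The entries of the partial sum T_a(i) of the proof idea.\<close>

definition tangent_tail ::
    "nat \<Rightarrow> (nat \<Rightarrow> nat) \<Rightarrow> (nat \<Rightarrow> nat \<Rightarrow> real mat) \<Rightarrow> (nat \<Rightarrow> nat \<Rightarrow> real mat)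
      \<Rightarrow> (nat \<Rightarrow> nat \<Rightarrow> real mat) \<Rightarrow> (nat \<Rightarrow> nat) \<Rightarrow> nat \<Rightarrow> nat \<Rightarrow> real" where
  "tangent_tail d r U Ut W i a \<alpha> =
     (\<Sum>k\<in>{a..d}. (core_prod r U i a k * (W k (i k) * core_prod r Ut i (Suc k) (Suc d))) $$ (\<alpha>, 0))"

lemma tangent_repr_iff_tangent_tail:
  assumes "core_dims d n r G" "core_dims d n r H" "core_dims d n r D" "r 0 = 1" "r d = 1"
  shows "tangent_repr d n G H D Z \<longleftrightarrow> (\<forall>i\<in>tt_index d n. Z i = tangent_tail d r G H D i 1 0)"
proof -
  have "(\<Sum>k=1..d. mprod 1 (map (\<lambda>j. G j (i j)) [1..<k] @ [D k (i k)] @ map (\<lambda>j. H j (i j)) [k+1..<d+1]) $$ (0, 0))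
      = tangent_tail d r G H D i 1 0" if "i \<in> tt_index d n" for i
    unfolding tangent_tail_def by (intro sum.cong refl) (simp only: tangent_term_eq[OF assms that])
  then show ?thesis by (auto simp: tangent_repr_def)
qed

lemma tangent_tail_last:
  assumes "r d = 1" and "W d (i d) \<in> carrier_mat (r (d - 1)) 1"
  shows "tangent_tail d r U Ut W i d \<alpha> = W d (i d) $$ (\<alpha>, 0)"
  using assms by (simp add: tangent_tail_def)

lemma tangent_tail_Suc:
  assumes rd: "r d = 1" and cU: "core_dims d n r U" and cUt: "core_dims d n r Ut" and cW: "core_dims d n r W"
    and i: "i \<in> tt_index d n" and a: "1 \<le> a" "a < d" and \<alpha>: "\<alpha> < r (a - 1)"
  shows "tangent_tail d r U Ut W i a \<alpha>
       = (\<Sum>\<delta><r a. W a (i a) $$ (\<alpha>, \<delta>) * core_prod r Ut i (Suc a) (Suc d) $$ (\<delta>, 0))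
       + (\<Sum>\<beta><r a. U a (i a) $$ (\<alpha>, \<beta>) * tangent_tail d r U Ut W i (Suc a) \<beta>)"
proof -
  let ?Q = "\<lambda>k. core_prod r Ut i (Suc k) (Suc d)"
  have idx: "\<forall>j\<in>{1..d}. i j < n j" using i by (simp add: tt_index_def)
  have W: "W k (i k) \<in> carrier_mat (r (k - 1)) (r k)" if "k \<in> {1..d}" for k
    using that idx by (intro core_dims_carrier[OF cW]) auto
  have Q: "?Q k \<in> carrier_mat (r k) 1" if "k \<le> d" for k
    using core_prod_carrier[OF cUt, of "Suc k" "Suc d" i] that idx rd by auto
  have Ua: "U a (i a) \<in> carrier_mat (r (a - 1)) (r a)"
    using a idx by (intro core_dims_carrier[OF cU]) auto
  have "tangent_tail d r U Ut W i a \<alpha> = (W a (i a) * ?Q a) $$ (\<alpha>, 0)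
      + (\<Sum>k\<in>{Suc a..d}. (core_prod r U i a k * (W k (i k) * ?Q k)) $$ (\<alpha>, 0))"
    unfolding tangent_tail_def using a W[of a] Q[of a] by (simp add: sum.atLeast_Suc_atMost)
  also have "(W a (i a) * ?Q a) $$ (\<alpha>, 0) = (\<Sum>\<delta><r a. W a (i a) $$ (\<alpha>, \<delta>) * ?Q a $$ (\<delta>, 0))"
    using W[of a] Q[of a] \<alpha> a by (simp add: scalar_prod_def lessThan_atLeast0)
  also have "(\<Sum>k\<in>{Suc a..d}. (core_prod r U i a k * (W k (i k) * ?Q k)) $$ (\<alpha>, 0))
      = (\<Sum>k\<in>{Suc a..d}. \<Sum>\<beta><r a. U a (i a) $$ (\<alpha>, \<beta>) * (core_prod r U i (Suc a) k * (W k (i k) * ?Q k)) $$ (\<beta>, 0))"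
  proof (intro sum.cong refl)
    fix k assume k: "k \<in> {Suc a..d}"
    have P: "core_prod r U i (Suc a) k \<in> carrier_mat (r a) (r (k - 1))"
      using core_prod_carrier[OF cU, of "Suc a" k i] k idx by auto
    have Qk: "?Q k \<in> carrier_mat (r k) 1" using Q k by simp
    have WQ: "W k (i k) * ?Q k \<in> carrier_mat (r (k - 1)) 1" using W[of k] Qk k a by auto
    have "core_prod r U i a k * (W k (i k) * ?Q k) = U a (i a) * (core_prod r U i (Suc a) k * (W k (i k) * ?Q k))"
      using core_prod_Cons[of a k U i r, OF _ Ua] k assoc_mult_mat[OF Ua P WQ] by simp
    then show "(core_prod r U i a k * (W k (i k) * ?Q k)) $$ (\<alpha>, 0)
        = (\<Sum>\<beta><r a. U a (i a) $$ (\<alpha>, \<beta>) * (core_prod r U i (Suc a) k * (W k (i k) * ?Q k)) $$ (\<beta>, 0))"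
      using Ua P WQ Qk \<alpha> by (simp add: scalar_prod_def lessThan_atLeast0)
  qed
  also have "\<dots> = (\<Sum>\<beta><r a. U a (i a) $$ (\<alpha>, \<beta>) * tangent_tail d r U Ut W i (Suc a) \<beta>)"
    unfolding tangent_tail_def by (subst sum.swap) (simp add: sum_distrib_left)
  finally show ?thesis .
qed

lemma tangent_tail_fun_upd_Suc:
  assumes "r d = 1" "core_dims d n r U" "core_dims d n r Ut" "core_dims d n r W"
    and i: "i \<in> tt_index d n" and a: "1 \<le> a" "a < d" and x: "x < n a" and \<alpha>: "\<alpha> < r (a - 1)"
  shows "tangent_tail d r U Ut W (i(a := x)) a \<alpha>
       = (\<Sum>\<delta><r a. W a x $$ (\<alpha>, \<delta>) * core_prod r Ut i (Suc a) (Suc d) $$ (\<delta>, 0))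
       + (\<Sum>\<beta><r a. U a x $$ (\<alpha>, \<beta>) * tangent_tail d r U Ut W i (Suc a) \<beta>)"
proof -
  have i': "i(a := x) \<in> tt_index d n" using i a x by (auto simp: tt_index_def)
  have local: "core_prod r G (i(a := x)) b c = core_prod r G i b c" if "a < b" for G b c
    using that by (intro core_prod_cong) simp
  have "tangent_tail d r U Ut W (i(a := x)) (Suc a) \<beta> = tangent_tail d r U Ut W i (Suc a) \<beta>" for \<beta>
    unfolding tangent_tail_def by (intro sum.cong refl) (simp add: local)
  then show ?thesis using tangent_tail_Suc[OF assms(1-4) i' a \<alpha>] by (simp add: local)
qed

lemma tangent_repr_mult_minus:
  assumes r0: "r 0 = 1" and rd: "r d = 1"
    and cU: "core_dims d n r U" and cUt: "core_dims d n r Ut"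
    and cA: "core_dims d n r A" and cB: "core_dims d n r B"
    and S: "\<forall>k\<le>d. S k \<in> carrier_mat (r k) (r k)" and Sd: "S d = 1\<^sub>m 1"
    and gauge: "\<forall>k\<in>{1..d}. \<forall>x<n k. U k x * S k = S (k - 1) * Ut k x"
    and A: "tangent_repr d n U U A Z" and B: "tangent_repr d n U Ut B Z"
  shows "tangent_repr d n U Ut (\<lambda>k x. A k x * S k - B k x) (\<lambda>_. 0)"
proof -
  let ?W = "\<lambda>k x. A k x * S k - B k x"
  have cW: "core_dims d n r ?W" using cB by (simp add: core_dims_def minus_carrier_mat)
  have "tangent_tail d r U Ut ?W i 1 0 = tangent_tail d r U U A i 1 0 - tangent_tail d r U Ut B i 1 0"
    if i: "i \<in> tt_index d n" for i
  proof -
    have idx: "\<forall>j\<in>{1..d}. i j < n j" using i by (simp add: tt_index_def)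
    have "(core_prod r U i 1 k * (?W k (i k) * core_prod r Ut i (Suc k) (Suc d))) $$ (0, 0)
        = (core_prod r U i 1 k * (A k (i k) * core_prod r U i (Suc k) (Suc d))) $$ (0, 0)
        - (core_prod r U i 1 k * (B k (i k) * core_prod r Ut i (Suc k) (Suc d))) $$ (0, 0)"
      if k: "k \<in> {1..d}" for k
    proof -
      have P: "core_prod r U i 1 k \<in> carrier_mat 1 (r (k - 1))"
        using core_prod_carrier[OF cU, of 1 k i] k idx r0 by auto
      have Ak: "A k (i k) \<in> carrier_mat (r (k - 1)) (r k)" and Bk: "B k (i k) \<in> carrier_mat (r (k - 1)) (r k)"
        using core_dims_carrier[OF cA k] core_dims_carrier[OF cB k] k idx by auto
      have Q: "core_prod r U i (Suc k) (Suc d) \<in> carrier_mat (r k) 1"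
        and Qt: "core_prod r Ut i (Suc k) (Suc d) \<in> carrier_mat (r k) 1"
        using core_prod_carrier[OF cU, of "Suc k" "Suc d" i] core_prod_carrier[OF cUt, of "Suc k" "Suc d" i]
          k idx rd by auto
      have Sk: "S k \<in> carrier_mat (r k) (r k)" using S k by auto
      have "core_prod r U i (Suc k) (Suc d) * S d = S k * core_prod r Ut i (Suc k) (Suc d)"
        using core_prod_gauge[OF cU cUt S gauge, of "Suc k" "Suc d" i] k idx by simp
      then have SQ: "S k * core_prod r Ut i (Suc k) (Suc d) = core_prod r U i (Suc k) (Suc d)"
        using Sd Q rd by simp
      show ?thesis using mult_gauge_diff[OF P Ak Bk Sk Q Qt SQ] P Bk Qt by simp
    qed
    then show ?thesis unfolding tangent_tail_def by (simp add: sum_subtractf)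
  qed
  moreover have "Z i = tangent_tail d r U U A i 1 0" "Z i = tangent_tail d r U Ut B i 1 0"
    if "i \<in> tt_index d n" for i
    using A B that tangent_repr_iff_tangent_tail[OF cU cU cA r0 rd] tangent_repr_iff_tangent_tail[OF cU cUt cB r0 rd]
    by auto
  ultimately show ?thesis using tangent_repr_iff_tangent_tail[OF cU cUt cW r0 rd] by simp
qed

locale gauged_tangent_cores =
  fixes d :: nat and n r :: "nat \<Rightarrow> nat" and U Ut W :: "nat \<Rightarrow> nat \<Rightarrow> real mat"
  assumes r_last: "r d = 1" and n_pos: "\<forall>j\<in>{1..d}. 0 < n j" and r_pos: "\<forall>k\<le>d. 0 < r k"
    and U_dims: "core_dims d n r U" and Ut_dims: "core_dims d n r Ut" and W_dims: "core_dims d n r W"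
    and U_left_orth: "left_orth d n r U" and Ut_right_orth: "right_orth d n r Ut"
    and W_gauge: "gauge_cond d n r U W"
begin

abbreviation tail :: "(nat \<Rightarrow> nat) \<Rightarrow> nat \<Rightarrow> nat \<Rightarrow> real" where
  "tail \<equiv> tangent_tail d r U Ut W"

lemma tail_zero_imp_core_zero:
  assumes a: "1 \<le> a" "a < d" and zero: "\<forall>i\<in>tt_index d n. \<forall>\<alpha><r (a - 1). tail i a \<alpha> = 0"
    and x: "x < n a" and \<alpha>: "\<alpha> < r (a - 1)" and \<gamma>: "\<gamma> < r a"
  shows "W a x $$ (\<alpha>, \<gamma>) = 0"
proof -
  have ra: "0 < r (a - 1)" using r_pos a by auto
  define M where "M \<delta> = (\<Sum>x<n a. \<Sum>\<alpha><r (a - 1). W a x $$ (\<alpha>, \<gamma>) * W a x $$ (\<alpha>, \<delta>))" for \<delta>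
  have M_orth: "\<forall>i\<in>tt_index d n. (\<Sum>\<delta><r a. M \<delta> * core_prod r Ut i (Suc a) (Suc d) $$ (\<delta>, 0)) = 0"
  proof
    fix i assume i: "i \<in> tt_index d n"
    have upd: "i(a := x) \<in> tt_index d n" if "x < n a" for x using i that a by (auto simp: tt_index_def)
    have "0 = (\<Sum>x<n a. \<Sum>\<alpha><r (a - 1). W a x $$ (\<alpha>, \<gamma>) * tail (i(a := x)) a \<alpha>)"
      using zero upd by simp
    also have "\<dots> = (\<Sum>x<n a. \<Sum>\<alpha><r (a - 1). W a x $$ (\<alpha>, \<gamma>)
                        * (\<Sum>\<delta><r a. W a x $$ (\<alpha>, \<delta>) * core_prod r Ut i (Suc a) (Suc d) $$ (\<delta>, 0)))
        + (\<Sum>x<n a. \<Sum>\<alpha><r (a - 1). W a x $$ (\<alpha>, \<gamma>) * (\<Sum>\<beta><r a. U a x $$ (\<alpha>, \<beta>) * tail i (Suc a) \<beta>))"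
      using tangent_tail_fun_upd_Suc[OF r_last U_dims Ut_dims W_dims i a] by (simp add: distrib_left sum.distrib)
    also have "\<dots> = (\<Sum>\<delta><r a. M \<delta> * core_prod r Ut i (Suc a) (Suc d) $$ (\<delta>, 0))
        + (\<Sum>\<beta><r a. (\<Sum>x<n a. \<Sum>\<alpha><r (a - 1). W a x $$ (\<alpha>, \<gamma>) * U a x $$ (\<alpha>, \<beta>)) * tail i (Suc a) \<beta>)"
      unfolding sum_sum_mult_sum_swap M_def ..
    also have "\<dots> = (\<Sum>\<delta><r a. M \<delta> * core_prod r Ut i (Suc a) (Suc d) $$ (\<delta>, 0))"
      using gauge_cond_sum_eq_0[OF W_gauge _ ra \<gamma>] a by simp
    finally show "(\<Sum>\<delta><r a. M \<delta> * core_prod r Ut i (Suc a) (Suc d) $$ (\<delta>, 0)) = 0" by simp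
  qed
  have "M \<gamma> = 0"
    using core_prod_suffix_rows_independent[OF r_last Ut_right_orth Ut_dims n_pos _ _ M_orth \<gamma>] a by simp
  then have squares: "(\<Sum>x<n a. \<Sum>\<alpha><r (a - 1). W a x $$ (\<alpha>, \<gamma>) * W a x $$ (\<alpha>, \<gamma>)) = 0"
    unfolding M_def .
  show ?thesis using sum_sum_squares_eq_0D[OF _ _ squares] x \<alpha> by simp
qed

lemma tail_zero_imp_tail_Suc_zero:
  assumes a: "1 \<le> a" "a < d" and zero: "\<forall>i\<in>tt_index d n. \<forall>\<alpha><r (a - 1). tail i a \<alpha> = 0"
    and i: "i \<in> tt_index d n" and \<gamma>: "\<gamma> < r a"
  shows "tail i (Suc a) \<gamma> = 0"
proof -
  have ra: "0 < r (a - 1)" using r_pos a by auto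
  have upd: "i(a := x) \<in> tt_index d n" if "x < n a" for x using i that a by (auto simp: tt_index_def)
  have "0 = (\<Sum>x<n a. \<Sum>\<alpha><r (a - 1). U a x $$ (\<alpha>, \<gamma>) * tail (i(a := x)) a \<alpha>)"
    using zero upd by simp
  also have "\<dots> = (\<Sum>x<n a. \<Sum>\<alpha><r (a - 1). U a x $$ (\<alpha>, \<gamma>) * (\<Sum>\<beta><r a. U a x $$ (\<alpha>, \<beta>) * tail i (Suc a) \<beta>))"
    using tangent_tail_fun_upd_Suc[OF r_last U_dims Ut_dims W_dims i a] tail_zero_imp_core_zero[OF a zero]
    by simp
  also have "\<dots> = (\<Sum>\<beta><r a. (if \<gamma> = \<beta> then 1 else 0) * tail i (Suc a) \<beta>)"
    unfolding sum_sum_mult_sum_swap using left_orth_sum_eq[OF U_left_orth _ ra \<gamma>] a by simp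
  also have "\<dots> = tail i (Suc a) \<gamma>"
    using \<gamma> by (simp add: if_distrib[of "\<lambda>t. t * _"] cong: if_cong)
  finally show ?thesis by simp
qed

lemma tail_zero_imp_cores_zero:
  assumes "1 \<le> a" "a \<le> d" "\<forall>i\<in>tt_index d n. \<forall>\<alpha><r (a - 1). tail i a \<alpha> = 0"
    and "a \<le> k" "k \<le> d" "x < n k"
  shows "W k x = 0\<^sub>m (r (k - 1)) (r k)"
  using assms
proof (induction "d - a" arbitrary: a)
  case 0
  then have k: "k = d" "a = d" by auto
  define i where "i = (\<lambda>j. if j = d then x else 0)"
  have i: "i \<in> tt_index d n" using 0 k n_pos by (auto simp: tt_index_def i_def)
  have Wx: "W d x \<in> carrier_mat (r (d - 1)) 1"
    using core_dims_carrier[OF W_dims, of d x] 0 k r_last by auto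
  have "W d x $$ (\<alpha>, 0) = 0" if "\<alpha> < r (d - 1)" for \<alpha>
  proof -
    have "tail i d \<alpha> = 0" using "0.prems"(3) i that k by simp
    moreover have "tail i d \<alpha> = W d x $$ (\<alpha>, 0)"
      using tangent_tail_last[where r = r and d = d and W = W and i = i, OF r_last] Wx by (simp add: i_def)
    ultimately show ?thesis by simp
  qed
  then show ?case using Wx k r_last by (intro eq_matI) auto
next
  case (Suc y)
  then have a: "1 \<le> a" "a < d" by auto
  show ?case
  proof (cases "k = a")
    case True
    have "W a x \<in> carrier_mat (r (a - 1)) (r a)"
      using core_dims_carrier[OF W_dims, of a x] Suc.prems True by auto
    moreover have "W a x $$ (\<alpha>, \<gamma>) = 0" if "\<alpha> < r (a - 1)" "\<gamma> < r a" for \<alpha> \<gamma>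
      using tail_zero_imp_core_zero[OF a Suc.prems(3)] Suc.prems(6) True that by simp
    ultimately show ?thesis using True by (intro eq_matI) auto
  next
    case False
    have zero: "\<forall>i\<in>tt_index d n. \<forall>\<alpha><r (Suc a - 1). tail i (Suc a) \<alpha> = 0"
      using tail_zero_imp_tail_Suc_zero[OF a Suc.prems(3)] by simp
    show ?thesis
      using Suc.hyps(1)[of "Suc a", OF _ _ _ zero] Suc.hyps(2) Suc.prems False a by simp
  qed
qed

theorem tangent_repr_zero_imp_cores_zero:
  assumes "r 0 = 1" and "tangent_repr d n U Ut W (\<lambda>_. 0)" and "k \<in> {1..d}" and "x < n k"
  shows "W k x = 0\<^sub>m (r (k - 1)) (r k)"
proof -
  have zero: "\<forall>i\<in>tt_index d n. \<forall>\<alpha><r (1 - 1). tail i 1 \<alpha> = 0"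
    using assms(2) tangent_repr_iff_tangent_tail[OF U_dims Ut_dims W_dims assms(1) r_last] assms(1) by simp
  show ?thesis by (rule tail_zero_imp_cores_zero[OF _ _ zero]) (use assms(3,4) in auto)
qed

end

lemma gauged_tangent_repr_cores_eq:
  assumes r0: "r 0 = 1" and rd: "r d = 1" and np: "\<forall>j\<in>{1..d}. 0 < n j" and r_pos: "\<forall>k\<le>d. 0 < r k"
    and cU: "core_dims d n r U" and cUt: "core_dims d n r Ut"
    and lo: "left_orth d n r U" and ro: "right_orth d n r Ut"
    and S: "\<forall>k\<le>d. S k \<in> carrier_mat (r k) (r k)" and Sd: "S d = 1\<^sub>m 1"
    and gauge: "\<forall>k\<in>{1..d}. \<forall>x<n k. U k x * S k = S (k - 1) * Ut k x"
    and cA: "core_dims d n r A" and A: "tangent_repr d n U U A Z" and gA: "gauge_cond d n r U A"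
    and cB: "core_dims d n r B" and B: "tangent_repr d n U Ut B Z" and gB: "gauge_cond d n r U B"
    and k: "k \<in> {1..d}" and x: "x < n k"
  shows "B k x = A k x * S k"
proof -
  interpret gauged_tangent_cores d n r U Ut "\<lambda>k x. A k x * S k - B k x"
    using rd np r_pos cU cUt lo ro cB gauge_cond_mult_minus[OF r_pos cA cB S gA gB]
    by unfold_locales (simp_all add: core_dims_def minus_carrier_mat)
  have "A k x * S k - B k x = 0\<^sub>m (r (k - 1)) (r k)"
    using tangent_repr_zero_imp_cores_zero[OF r0 tangent_repr_mult_minus[OF r0 rd cU cUt cA cB S Sd gauge A B] k x] .
  moreover have "A k x * S k \<in> carrier_mat (r (k - 1)) (r k)"
    using core_dims_carrier[OF cA k x] S k by auto
  ultimately show ?thesis using minus_mat_eq_0D core_dims_carrier[OF cB k x] by metis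
qed

lemma Xge_factor_eq_transpose_gauge:
  assumes rd: "r d = 1" and np: "\<forall>j\<in>{1..d}. 0 < n j"
    and cU: "core_dims d n r U" and cUt: "core_dims d n r Ut" and ro: "right_orth d n r Ut"
    and S: "\<forall>k\<le>d. S k \<in> carrier_mat (r k) (r k)" and Sd: "S d = 1\<^sub>m 1"
    and gauge: "\<forall>k\<in>{1..d}. \<forall>x<n k. U k x * S k = S (k - 1) * Ut k x"
    and k: "k \<in> {1..d - 1}" and R: "R \<in> carrier_mat (r k) (r k)"
    and XR: "Xge d n r U (k + 1) = Xge d n r Ut (k + 1) * R"
  shows "R = transpose_mat (S k)"
proof (rule orthonormal_rows_factor_eq_transpose)
  show "XgeT d n r Ut (d - k) \<in> carrier_mat (r k) (\<Prod>j<d - k. n (d - j))"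
    using XgeT_carrier[of r d n Ut "d - k"] rd k by auto
  show "XgeT d n r Ut (d - k) * transpose_mat (XgeT d n r Ut (d - k)) = 1\<^sub>m (r k)"
    using XgeT_orthonormal[OF rd ro, of "d - k"] k by auto
  show "XgeT d n r U (d - k) = S k * XgeT d n r Ut (d - k)"
    using XgeT_gauge[OF rd cU cUt np S Sd gauge, of "d - k"] k by auto
  show "transpose_mat (XgeT d n r U (d - k)) = transpose_mat (XgeT d n r Ut (d - k)) * R"
    using XR by (simp add: Xge_def)
qed (use S R k in auto)

lemma gauge_relatedE:
  assumes "gauge_related d n r U Ut" and "r 0 = 1" and "r d = 1"
  obtains S where "\<forall>k\<le>d. S k \<in> carrier_mat (r k) (r k)" and "S d = 1\<^sub>m 1"
    and "\<forall>k\<in>{1..d}. \<forall>x<n k. U k x * S k = S (k - 1) * Ut k x"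
proof -
  obtain S where S0: "S 0 = 1\<^sub>m 1" and Sd: "S d = 1\<^sub>m 1"
    and S: "\<forall>k\<in>{1..d-1}. S k \<in> carrier_mat (r k) (r k) \<and> invertible_mat (S k)"
    and gauge: "\<forall>k\<in>{1..d}. \<forall>x<n k. U k x * S k = S (k - 1) * Ut k x"
    using assms(1) unfolding gauge_related_def by blast
  have "S k \<in> carrier_mat (r k) (r k)" if "k \<le> d" for k
  proof -
    from that consider "k = 0" | "k = d" | "k \<in> {1..d-1}" by force
    then show ?thesis using S0 Sd S assms(2,3) by cases auto
  qed
  with Sd gauge that show ?thesis by blast
qed

theorem lemma12:
  fixes d :: nat and n r :: "nat \<Rightarrow> nat"
    and X V :: "(nat \<Rightarrow> nat) \<Rightarrow> real"
    and U Ut dV dVt :: "nat \<Rightarrow> nat \<Rightarrow> real mat"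
    and Rk :: "nat \<Rightarrow> real mat"
  assumes "d \<ge> 2"
    and "\<forall>j\<in>{1..d}. n j > 0"
    and "r 0 = 1" and "r d = 1" and "\<forall>k\<in>{1..d-1}. r k > 0"
    and "has_tt_rank d n r X"
    and "core_dims d n r U" and "tt_repr d n U X" and "left_orth d n r U"
    and "core_dims d n r Ut" and "tt_repr d n Ut X" and "right_orth d n r Ut"
    and "gauge_related d n r U Ut"
    and "\<forall>k\<in>{1..d-1}. Rk k \<in> carrier_mat (r k) (r k) \<and> invertible_mat (Rk k) \<and>
            Xge d n r U (k+1) = Xge d n r Ut (k+1) * Rk k"
    and "core_dims d n r dV" and "tangent_repr d n U U dV V" and "gauge_cond d n r U dV"
    and "core_dims d n r dVt" and "tangent_repr d n U Ut dVt V" and "gauge_cond d n r U dVt"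
  shows "(\<forall>k\<in>{1..d-1}. leftU r n dVt k = leftU r n dV k * transpose_mat (Rk k))
         \<and> leftU r n dVt d = leftU r n dV d"
proof -
  obtain S where S: "\<forall>k\<le>d. S k \<in> carrier_mat (r k) (r k)" and Sd: "S d = 1\<^sub>m 1"
    and gauge: "\<forall>k\<in>{1..d}. \<forall>x<n k. U k x * S k = S (k - 1) * Ut k x"
    using gauge_relatedE[OF assms(13,3,4)] .
  have r_pos: "\<forall>k\<le>d. 0 < r k"
  proof (intro allI impI)
    fix k assume "k \<le> d"
    then consider "k = 0" | "k = d" | "k \<in> {1..d-1}" by force
    then show "0 < r k" using assms(3-5) by cases auto
  qed
  have dVt: "leftU r n dVt k = leftU r n dV k * S k" if k: "k \<in> {1..d}" for k
    using gauged_tangent_repr_cores_eq[OF assms(3,4,2) r_pos assms(7,10,9,12) S Sd gauge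
        assms(15-17) assms(18-20) k] assms(15) S r_pos k
    by (intro leftU_mult) (auto simp: core_dims_def)
  have R: "Rk k = transpose_mat (S k)" if k: "k \<in> {1..d-1}" for k
    using Xge_factor_eq_transpose_gauge[OF assms(4,2,7,10,12) S Sd gauge k] assms(14) k by blast
  have "leftU r n dVt d = leftU r n dV d * 1\<^sub>m 1" using dVt[of d] Sd assms(1) by simp
  also have "\<dots> = leftU r n dV d" using assms(4) by (simp add: leftU_def)
  finally show ?thesis using dVt R by auto
qed

end
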